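(* The class $\{X\in 2^\omega: X \text{ is recursively traceable}\}$ has Hausdorff dimension $0$.
   Context: Fix a recursive canonical enumeration $n\mapsto D_n$ of all finite subsets of $\omega$ (with each $D_n$ uniformly recursive). A set $A\in 2^\omega$ is recursively traceable if there is a computable function $b$ (a bound) such that for every function $f\le_T A$ there is a computable function $g$ with $|D_{g(n)}|\le b(n)$ and $f(n)\in D_{g(n)}$ for all $n\in\omega$. Hausdorff dimension is the classical Hausdorff dimension on Cantor space. *)

theory Defs
  imports Complex_Main "HOL-Library.Extended_Nonnegative_Real"
begin

text \<open>grec A n f: f (applied to argument lists of length n) is a total
  recursive function of arity n relative to the set A (Kleene's
  general recursive functions: basic functions, the characteristic
  function of A, composition, primitive recursion, and minimisation
  applied to regular functions).\<close>

inductive grec :: "(nat \<Rightarrow> bool) \<Rightarrow> nat \<Rightarrow> (nat list \<Rightarrow> nat) \<Rightarrow> bool"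
  for A :: "nat \<Rightarrow> bool" where
  zero: "grec A n (\<lambda>xs. 0)"
| succ: "grec A 1 (\<lambda>xs. Suc (hd xs))"
| proj: "i < n \<Longrightarrow> grec A n (\<lambda>xs. xs ! i)"
| orac: "grec A 1 (\<lambda>xs. if A (hd xs) then 1 else 0)"
| comp: "grec A m g \<Longrightarrow> (\<forall>i<m. grec A n (fs i)) \<Longrightarrow>
           grec A n (\<lambda>xs. g (map (\<lambda>i. fs i xs) [0..<m]))"
| prim_rec: "grec A n g \<Longrightarrow> grec A (n + 2) h \<Longrightarrow>
           grec A (n + 1) (\<lambda>xs. rec_nat (g (tl xs)) (\<lambda>k r. h (k # r # tl xs)) (hd xs))"
| mu: "grec A (n + 1) g \<Longrightarrow> (\<forall>xs. length xs = n \<longrightarrow> (\<exists>y. g (y # xs) = 0)) \<Longrightarrow>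
           grec A n (\<lambda>xs. LEAST y. g (y # xs) = 0)"

definition turing_below :: "(nat \<Rightarrow> nat) \<Rightarrow> (nat \<Rightarrow> bool) \<Rightarrow> bool" where
  "turing_below f A \<longleftrightarrow> (\<exists>g. grec A 1 g \<and> (\<forall>x. f x = g [x]))"

definition computable :: "(nat \<Rightarrow> nat) \<Rightarrow> bool" where
  "computable f \<longleftrightarrow> turing_below f (\<lambda>_. False)"

definition D :: "nat \<Rightarrow> nat set" where
  "D n = {i. bit n i}"

definition recursively_traceable :: "(nat \<Rightarrow> bool) \<Rightarrow> bool" where
  "recursively_traceable A \<longleftrightarrow>
     (\<exists>b. computable b \<and>
        (\<forall>f. turing_below f A \<longrightarrow>
           (\<exists>g. computable g \<and> (\<forall>n. card (D (g n)) \<le> b n \<and> f n \<in> D (g n)))))"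

text \<open>Cantor space 2^omega is nat \<Rightarrow> bool, with the standard metric
  d(X,Y) = 2^(-min{i. X i \<noteq> Y i}); the basic open cylinder of a string
  \<sigma> has diameter 2^(-|\<sigma>|).\<close>

definition cyl :: "bool list \<Rightarrow> (nat \<Rightarrow> bool) set" where
  "cyl \<sigma> = {X. \<forall>i<length \<sigma>. X i = \<sigma> ! i}"

definition hausdorff_measure :: "real \<Rightarrow> (nat \<Rightarrow> bool) set \<Rightarrow> ennreal" where
  "hausdorff_measure s C =
     (SUP m. INF \<sigma>\<in>{\<sigma> :: nat \<Rightarrow> bool list.
                     (\<forall>k. m \<le> length (\<sigma> k)) \<and> C \<subseteq> (\<Union>k. cyl (\<sigma> k))}.
                (\<Sum>k. ennreal (2 powr (- s * real (length (\<sigma> k))))))"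

definition hausdorff_dim :: "(nat \<Rightarrow> bool) set \<Rightarrow> real" where
  "hausdorff_dim C = Inf {s. 0 \<le> s \<and> hausdorff_measure s C = 0}"

end

theory Submission
  imports Defs "HOL-Library.Countable" "HOL-Analysis.Caratheodory"
begin

text \<open>Let \<open>X\<close> be recursively traceable with bound \<open>b\<close>.  The map sending \<open>n\<close> to the code
  of the prefix of \<open>X\<close> of length \<open>n b(n) + n\<close> is \<open>X\<close>-computable, so some computable \<open>g\<close>
  traces it: for every \<open>n\<close>, \<open>X\<close> lies in one of at most \<open>b(n)\<close> cylinders of that length.
  Their total \<open>s\<close>-weight is \<open>b(n) 2 powr (- s (n b(n) + n)) \<le> 2 powr (- s n)\<close> as soon as
  \<open>s n \<ge> 1\<close>, so each pair \<open>(b, g)\<close> yields a class of \<open>s\<close>-dimensional measure zero for every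
  \<open>s > 0\<close>.  There are only countably many such pairs, and \<open>X\<close> lies in the class of one of them.\<close>

section \<open>Hausdorff measure zero via cylinder covers\<close>

definition cylinder_covers :: "nat \<Rightarrow> (nat \<Rightarrow> bool) set \<Rightarrow> (nat \<Rightarrow> bool list) set" where
  "cylinder_covers m C = {\<sigma>. (\<forall>k. m \<le> length (\<sigma> k)) \<and> C \<subseteq> (\<Union>k. cyl (\<sigma> k))}"

definition string_weight :: "real \<Rightarrow> bool list \<Rightarrow> ennreal" where
  "string_weight s \<sigma> = ennreal (2 powr (- s * real (length \<sigma>)))"

definition cover_weight :: "real \<Rightarrow> (nat \<Rightarrow> bool list) \<Rightarrow> ennreal" where
  "cover_weight s \<sigma> = (\<Sum>k. string_weight s (\<sigma> k))"

lemma hausdorff_measure_cylinder_covers: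
  "hausdorff_measure s C = (SUP m. INF \<sigma>\<in>cylinder_covers m C. cover_weight s \<sigma>)"
  unfolding hausdorff_measure_def cylinder_covers_def cover_weight_def string_weight_def ..

lemma hausdorff_measure_mono:
  assumes "C \<subseteq> C'"
  shows "hausdorff_measure s C \<le> hausdorff_measure s C'"
proof -
  have "cylinder_covers m C' \<subseteq> cylinder_covers m C" for m
    using assms by (auto simp: cylinder_covers_def)
  then show ?thesis
    unfolding hausdorff_measure_cylinder_covers by (intro SUP_mono' INF_superset_mono) auto
qed

lemma hausdorff_measure_eq_0_iff:
  "hausdorff_measure s C = 0 \<longleftrightarrow>
     (\<forall>m e. 0 < e \<longrightarrow> (\<exists>\<sigma>\<in>cylinder_covers m C. cover_weight s \<sigma> \<le> ennreal e))"
proof -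
  have INF_eq_0_iff: "(INF \<sigma>\<in>cylinder_covers m C. cover_weight s \<sigma>) = 0 \<longleftrightarrow>
        (\<forall>e>0. \<exists>\<sigma>\<in>cylinder_covers m C. cover_weight s \<sigma> \<le> ennreal e)" for m
  proof safe
    fix e :: real
    assume "(INF \<sigma>\<in>cylinder_covers m C. cover_weight s \<sigma>) = 0" "0 < e"
    then have "(INF \<sigma>\<in>cylinder_covers m C. cover_weight s \<sigma>) < ennreal e" by simp
    then show "\<exists>\<sigma>\<in>cylinder_covers m C. cover_weight s \<sigma> \<le> ennreal e"
      by (fastforce simp: INF_less_iff dest: less_imp_le)
  next
    assume covers: "\<forall>e>0. \<exists>\<sigma>\<in>cylinder_covers m C. cover_weight s \<sigma> \<le> ennreal e"
    have small: "(INF \<sigma>\<in>cylinder_covers m C. cover_weight s \<sigma>) \<le> ennreal e" if "0 < e" for e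
    proof -
      obtain \<sigma> where "\<sigma> \<in> cylinder_covers m C" "cover_weight s \<sigma> \<le> ennreal e"
        using covers \<open>0 < e\<close> by blast
      then show ?thesis by (simp add: INF_lower2)
    qed
    have "(INF \<sigma>\<in>cylinder_covers m C. cover_weight s \<sigma>) \<le> 0"
      by (rule ennreal_le_epsilon) (use small in simp)
    then show "(INF \<sigma>\<in>cylinder_covers m C. cover_weight s \<sigma>) = 0" by simp
  qed
  have "hausdorff_measure s C = 0 \<longleftrightarrow>
      (\<forall>m. (INF \<sigma>\<in>cylinder_covers m C. cover_weight s \<sigma>) = 0)"
    unfolding hausdorff_measure_cylinder_covers bot_ennreal[symmetric] by simp
  then show ?thesis by (simp only: INF_eq_0_iff)
qed

lemma suminf_ennreal_halves:
  assumes "0 \<le> e"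
  shows "(\<Sum>n. ennreal (e * (1/2) ^ Suc n)) = ennreal e"
proof -
  have "(\<lambda>n. e * (1/2::real) ^ Suc n) sums e"
    using sums_mult[OF power_half_series, of e] by simp
  then show ?thesis
    using assms by (simp add: suminf_ennreal2 sums_summable sums_unique[symmetric])
qed

lemma hausdorff_measure_UN_eq_0:
  fixes K :: "nat \<Rightarrow> (nat \<Rightarrow> bool) set"
  assumes null: "\<And>j. hausdorff_measure s (K j) = 0"
  shows "hausdorff_measure s (\<Union>j. K j) = 0"
  unfolding hausdorff_measure_eq_0_iff
proof (intro allI impI)
  fix m and e :: real
  assume "0 < e"
  then have "\<forall>j. \<exists>\<tau>\<in>cylinder_covers m (K j). cover_weight s \<tau> \<le> ennreal (e * (1/2) ^ Suc j)"
    using null by (simp add: hausdorff_measure_eq_0_iff)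
  then obtain \<tau> where \<tau>: "\<And>j. \<tau> j \<in> cylinder_covers m (K j)"
    and weight: "\<And>j. cover_weight s (\<tau> j) \<le> ennreal (e * (1/2) ^ Suc j)"
    by metis
  define \<sigma> where "\<sigma> k = \<tau> (fst (prod_decode k)) (snd (prod_decode k))" for k
  have "\<sigma> \<in> cylinder_covers m (\<Union>j. K j)"
    unfolding cylinder_covers_def
  proof safe
    fix k
    show "m \<le> length (\<sigma> k)"
      using \<tau> by (simp add: cylinder_covers_def \<sigma>_def)
  next
    fix X j
    assume "X \<in> K j"
    then obtain i where "X \<in> cyl (\<tau> j i)"
      using \<tau>[of j] by (auto simp: cylinder_covers_def)
    moreover have "\<sigma> (prod_encode (j, i)) = \<tau> j i"
      by (simp add: \<sigma>_def)
    ultimately show "X \<in> (\<Union>k. cyl (\<sigma> k))"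
      by (metis UN_iff UNIV_I)
  qed
  moreover have "cover_weight s \<sigma> \<le> ennreal e"
  proof -
    have "cover_weight s \<sigma> = (\<Sum>j. cover_weight s (\<tau> j))"
      unfolding cover_weight_def[of s \<sigma>] \<sigma>_def
      by (rule suminf_ennreal_2dimen) (simp add: cover_weight_def)
    also have "\<dots> \<le> (\<Sum>j. ennreal (e * (1/2) ^ Suc j))"
      by (intro suminf_le weight) auto
    also have "\<dots> = ennreal e"
      using \<open>0 < e\<close> by (intro suminf_ennreal_halves) simp
    finally show ?thesis .
  qed
  ultimately show "\<exists>\<sigma>\<in>cylinder_covers m (\<Union>j. K j). cover_weight s \<sigma> \<le> ennreal e"
    by blast
qed

lemma ex_length_weight_le:
  assumes "0 < s" "0 < d"
  shows "\<exists>l\<ge>m. 1 \<le> s * real l \<and> 2 powr (- s * real l) \<le> d"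
proof -
  obtain l :: nat where l: "max (real m) (max (1 / s) (- log 2 d / s)) \<le> real l"
    using real_arch_simple by blast
  then have "- log 2 d \<le> s * real l"
    using assms by (simp add: field_simps)
  then have "2 powr (- s * real l) \<le> 2 powr (log 2 d)"
    by simp
  with l assms show ?thesis
    by (intro exI[of _ l]) (simp add: field_simps)
qed

lemma hausdorff_measure_eq_0_finite_covers:
  assumes "0 < s"
    and covers: "\<And>m e. 0 < e \<Longrightarrow> \<exists>(S :: nat set) \<tau>. finite S \<and> (\<forall>i\<in>S. m \<le> length (\<tau> i))
                   \<and> C \<subseteq> (\<Union>i\<in>S. cyl (\<tau> i)) \<and> (\<Sum>i\<in>S. string_weight s (\<tau> i)) \<le> ennreal e"
  shows "hausdorff_measure s C = 0"
  unfolding hausdorff_measure_eq_0_iff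
proof (intro allI impI)
  fix m and e :: real
  assume "0 < e"
  then obtain S and \<tau> :: "nat \<Rightarrow> bool list"
    where "finite S" and len: "\<forall>i\<in>S. m \<le> length (\<tau> i)" and cov: "C \<subseteq> (\<Union>i\<in>S. cyl (\<tau> i))"
      and sum: "(\<Sum>i\<in>S. string_weight s (\<tau> i)) \<le> ennreal (e / 2)"
    using covers[of "e / 2" m] by auto
  \<comment> \<open>Covers are infinite sequences: pad with long strings of geometrically decreasing weight.\<close>
  have "\<exists>l\<ge>m. 2 powr (- s * real l) \<le> e / 2 * (1/2) ^ Suc i" for i
  proof -
    have "0 < e / 2 * (1/2) ^ Suc i"
      using \<open>0 < e\<close> by simp
    then show ?thesis
      using ex_length_weight_le[OF \<open>0 < s\<close>] by blast
  qed
  then obtain l where l: "\<And>i. m \<le> l i" "\<And>i. 2 powr (- s * real (l i)) \<le> e / 2 * (1/2) ^ Suc i"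
    by metis
  define \<sigma> where "\<sigma> i = (if i \<in> S then \<tau> i else replicate (l i) False)" for i
  have "\<sigma> \<in> cylinder_covers m C"
    unfolding cylinder_covers_def
  proof safe
    fix k
    show "m \<le> length (\<sigma> k)"
      using len l(1) by (simp add: \<sigma>_def)
  next
    fix X
    assume "X \<in> C"
    then obtain i where "i \<in> S" "X \<in> cyl (\<tau> i)"
      using cov by blast
    then have "X \<in> cyl (\<sigma> i)"
      by (simp add: \<sigma>_def)
    then show "X \<in> (\<Union>k. cyl (\<sigma> k))"
      by blast
  qed
  moreover have "cover_weight s \<sigma> \<le> ennreal e"
  proof -
    have "string_weight s (\<sigma> i)
        \<le> (if i \<in> S then string_weight s (\<tau> i) else 0) + ennreal (e / 2 * (1/2) ^ Suc i)" for i
      using l(2)[of i] by (simp add: \<sigma>_def string_weight_def ennreal_leI)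
    then have "cover_weight s \<sigma>
        \<le> (\<Sum>i. (if i \<in> S then string_weight s (\<tau> i) else 0) + ennreal (e / 2 * (1/2) ^ Suc i))"
      unfolding cover_weight_def by (intro suminf_le) auto
    also have "\<dots> = (\<Sum>i. if i \<in> S then string_weight s (\<tau> i) else 0)
        + (\<Sum>i. ennreal (e / 2 * (1/2) ^ Suc i))"
      by (rule suminf_add[symmetric]) auto
    also have "\<dots> = (\<Sum>i\<in>S. string_weight s (\<tau> i)) + ennreal (e / 2)"
    proof -
      have "(\<Sum>i. if i \<in> S then string_weight s (\<tau> i) else 0) = (\<Sum>i\<in>S. string_weight s (\<tau> i))"
        using \<open>finite S\<close> by (subst suminf_finite[of S]) auto
      moreover have "(\<Sum>i. ennreal (e / 2 * (1/2) ^ Suc i)) = ennreal (e / 2)"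
        using \<open>0 < e\<close> by (intro suminf_ennreal_halves) simp
      ultimately show ?thesis by (simp only:)
    qed
    also have "\<dots> \<le> ennreal (e / 2) + ennreal (e / 2)"
      using sum by (rule add_right_mono)
    also have "\<dots> = ennreal e"
      using \<open>0 < e\<close> by (simp flip: ennreal_plus)
    finally show ?thesis .
  qed
  ultimately show "\<exists>\<sigma>\<in>cylinder_covers m C. cover_weight s \<sigma> \<le> ennreal e"
    by blast
qed

lemma hausdorff_measure_empty:
  assumes "0 < s"
  shows "hausdorff_measure s {} = 0"
  using assms by (rule hausdorff_measure_eq_0_finite_covers) auto

lemma hausdorff_measure_countable_UN_eq_0:
  assumes "0 < s" "countable I" and null: "\<And>i. i \<in> I \<Longrightarrow> hausdorff_measure s (K i) = 0"
  shows "hausdorff_measure s (\<Union>i\<in>I. K i) = 0"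
proof (cases "I = {}")
  case True
  then show ?thesis by (simp add: hausdorff_measure_empty \<open>0 < s\<close>)
next
  case False
  then have "(\<Union>i\<in>I. K i) = (\<Union>j. K (from_nat_into I j))"
    using range_from_nat_into[OF False \<open>countable I\<close>] by (metis image_image)
  then show ?thesis
    using hausdorff_measure_UN_eq_0 null from_nat_into[OF False] by simp
qed

lemma hausdorff_dim_eq_0I:
  assumes "\<And>s. 0 < s \<Longrightarrow> hausdorff_measure s C = 0"
  shows "hausdorff_dim C = 0"
proof -
  let ?S = "{s. 0 \<le> s \<and> hausdorff_measure s C = 0}"
  have "1 \<in> ?S"
    using assms[of 1] by simp
  then have "?S \<noteq> {}"
    by blast
  have "bdd_below ?S"
    by (auto intro: bdd_belowI[of _ 0])
  have "Inf ?S \<le> e" if "0 < e" for e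
    using assms[OF that] that \<open>bdd_below ?S\<close> by (intro cInf_lower) auto
  then have "Inf ?S \<le> 0"
    using field_le_epsilon[of "Inf ?S" 0] by simp
  moreover have "0 \<le> Inf ?S"
    using \<open>?S \<noteq> {}\<close> by (rule cInf_greatest) simp
  ultimately show ?thesis
    unfolding hausdorff_dim_def by simp
qed

section \<open>Classes traced by prefix codes\<close>

primrec prefix_code :: "(nat \<Rightarrow> bool) \<Rightarrow> nat \<Rightarrow> nat" where
  "prefix_code A 0 = 0"
| "prefix_code A (Suc k) = 2 * prefix_code A k + of_bool (A k)"

definition string_of_code :: "nat \<Rightarrow> nat \<Rightarrow> bool list" where
  "string_of_code k x = map (\<lambda>i. bit x (k - Suc i)) [0..<k]"

lemma bit_prefix_code:
  assumes "i < k"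
  shows "bit (prefix_code A k) (k - Suc i) = A i"
  using assms
proof (induction k)
  case 0
  then show ?case by simp
next
  case (Suc k)
  show ?case
  proof (cases "i = k")
    case True
    then show ?thesis by (simp add: bit_0)
  next
    case False
    with Suc have "Suc k - Suc i = Suc (k - Suc i)" "i < k"
      by auto
    then show ?thesis
      using Suc.IH by (simp add: bit_Suc)
  qed
qed

lemma mem_cyl_string_of_prefix_code: "A \<in> cyl (string_of_code k (prefix_code A k))"
  by (simp add: cyl_def string_of_code_def bit_prefix_code)

lemma finite_D: "finite (D n)"
proof (rule finite_subset)
  show "D n \<subseteq> {..<n}"
  proof
    fix i
    assume "i \<in> D n"
    then have "n div 2 ^ i \<noteq> 0"
      by (auto simp: D_def bit_iff_odd dest: odd_pos)
    then have "2 ^ i \<le> n"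
      by (simp add: div_eq_0_iff)
    then show "i \<in> {..<n}"
      using less_exp[of i] by (simp del: less_exp)
  qed
qed simp

definition traced_prefixes :: "(nat \<Rightarrow> nat) \<Rightarrow> (nat \<Rightarrow> nat) \<Rightarrow> (nat \<Rightarrow> bool) set" where
  "traced_prefixes h g = {X. \<forall>n. prefix_code X (h n) \<in> D (g n)}"

lemma card_mult_weight_le:
  assumes "1 \<le> s * real n" "c \<le> b"
  shows "real c * 2 powr (- s * real (n * b + n)) \<le> 2 powr (- s * real n)"
proof -
  have "c \<le> 2 ^ b"
    using \<open>c \<le> b\<close> less_exp[of b] by linarith
  then have "real c \<le> 2 powr real b"
    by (simp add: powr_realpow)
  moreover have "2 powr (- s * real n * real b) \<le> 2 powr (- real b)"
    using assms(1) by (simp add: mult_le_cancel_right1)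
  ultimately have "real c * 2 powr (- s * real n * real b) \<le> 2 powr real b * 2 powr (- real b)"
    by (intro mult_mono) auto
  then have "real c * 2 powr (- s * real n * real b) * 2 powr (- s * real n) \<le> 2 powr (- s * real n)"
    by (simp add: powr_add[symmetric])
  then show ?thesis
    by (simp add: powr_add[symmetric] algebra_simps)
qed

lemma hausdorff_measure_traced_prefixes:
  assumes "0 < s" and card: "\<And>n. card (D (g n)) \<le> b n"
  shows "hausdorff_measure s (traced_prefixes (\<lambda>n. n * b n + n) g) = 0"
proof (rule hausdorff_measure_eq_0_finite_covers[OF \<open>0 < s\<close>])
  fix m and e :: real
  assume "0 < e"
  then obtain n where "m \<le> n" "1 \<le> s * real n" "2 powr (- s * real n) \<le> e"
    using ex_length_weight_le[OF \<open>0 < s\<close>] by blast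
  define L where "L = n * b n + n"
  have len: "m \<le> length (string_of_code L x)" for x
    using \<open>m \<le> n\<close> by (simp add: string_of_code_def L_def)
  have cover: "traced_prefixes (\<lambda>n. n * b n + n) g \<subseteq> (\<Union>x\<in>D (g n). cyl (string_of_code L x))"
    using mem_cyl_string_of_prefix_code by (fastforce simp: traced_prefixes_def L_def)
  have "(\<Sum>x\<in>D (g n). string_weight s (string_of_code L x))
      = ennreal (real (card (D (g n))) * 2 powr (- s * real L))"
    by (simp add: string_weight_def string_of_code_def ennreal_mult ennreal_of_nat_eq_real_of_nat)
  also have "\<dots> \<le> ennreal e"
    using order_trans[OF card_mult_weight_le[OF \<open>1 \<le> s * real n\<close> card[of n]]
        \<open>2 powr (- s * real n) \<le> e\<close>]
    by (simp add: L_def ennreal_leI)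
  finally show "\<exists>(S :: nat set) \<tau>. finite S \<and> (\<forall>i\<in>S. m \<le> length (\<tau> i))
      \<and> traced_prefixes (\<lambda>n. n * b n + n) g \<subseteq> (\<Union>i\<in>S. cyl (\<tau> i))
      \<and> (\<Sum>i\<in>S. string_weight s (\<tau> i)) \<le> ennreal e"
    using finite_D len cover by blast
qed

section \<open>Relative recursion\<close>

lemma grec_compose1:
  assumes "grec A 1 g" "grec A n f"
  shows "grec A n (\<lambda>xs. g [f xs])"
  using grec.comp[of A 1 g n "\<lambda>_. f"] assms by simp

lemma grec_compose2:
  assumes "grec A 2 g" "grec A n f1" "grec A n f2"
  shows "grec A n (\<lambda>xs. g [f1 xs, f2 xs])"
  using grec.comp[of A 2 g n "\<lambda>i. if i = 0 then f1 else f2"] assms by (simp add: upt_rec)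

lemma grec_add:
  assumes "grec A n f1" "grec A n f2"
  shows "grec A n (\<lambda>xs. f1 xs + f2 xs)"
proof -
  have "grec A (1 + 1) (\<lambda>xs. rec_nat ((\<lambda>ys. ys ! 0) (tl xs))
      (\<lambda>k r. (\<lambda>ys. Suc (hd [ys ! 1])) (k # r # tl xs)) (hd xs))"
    by (intro grec.prim_rec grec.proj grec_compose1[OF grec.succ]) simp_all
  moreover have "rec_nat a (\<lambda>k r. Suc r) m = m + a" for a m :: nat
    by (induction m) simp_all
  ultimately have "grec A 2 (\<lambda>xs. hd xs + tl xs ! 0)"
    by (simp add: numeral_2_eq_2)
  from grec_compose2[OF this assms] show ?thesis
    by simp
qed

lemma grec_mult:
  assumes "grec A n f1" "grec A n f2"
  shows "grec A n (\<lambda>xs. f1 xs * f2 xs)"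
proof -
  have "grec A (1 + 1) (\<lambda>xs. rec_nat ((\<lambda>ys. 0) (tl xs))
      (\<lambda>k r. (\<lambda>ys. ys ! 1 + ys ! 2) (k # r # tl xs)) (hd xs))"
    by (intro grec.prim_rec grec.zero grec_add grec.proj) simp_all
  moreover have "rec_nat 0 (\<lambda>k r. r + a) m = m * a" for a m :: nat
    by (induction m) simp_all
  ultimately have "grec A 2 (\<lambda>xs. hd xs * tl xs ! 0)"
    by (simp add: numeral_2_eq_2)
  from grec_compose2[OF this assms] show ?thesis
    by simp
qed

lemma grec_prefix_code: "grec A 1 (\<lambda>xs. prefix_code A (hd xs))"
proof -
  have "grec A (0 + 1) (\<lambda>xs. rec_nat ((\<lambda>ys. 0) (tl xs))
      (\<lambda>k r. (\<lambda>ys. ys ! 1 + ys ! 1 + (if A (hd [ys ! 0]) then 1 else 0)) (k # r # tl xs)) (hd xs))"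
    by (intro grec.prim_rec grec.zero grec_add grec_compose1[OF grec.orac] grec.proj) simp_all
  moreover have "rec_nat 0 (\<lambda>k r. r + r + (if A k then 1 else 0)) m = prefix_code A m" for m
    by (induction m) simp_all
  ultimately show ?thesis
    by simp
qed

lemma grec_without_oracle: "grec (\<lambda>_. False) n f \<Longrightarrow> grec A n f"
proof (induction rule: grec.induct)
  case orac
  show ?case by (simp add: grec.zero)
next
  case zero
  show ?case by (rule grec.zero)
next
  case succ
  show ?case by (rule grec.succ)
next
  case proj
  then show ?case by (rule grec.proj)
next
  case comp
  then show ?case by (intro grec.comp) auto
next
  case prim_rec
  then show ?case by (intro grec.prim_rec) auto
next
  case mu
  then show ?case by (intro grec.mu) auto
qed

lemma computable_prefix_length:
  assumes "computable b"
  shows "computable (\<lambda>n. n * b n + n)"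
proof -
  obtain g where g: "grec (\<lambda>_. False) 1 g" "\<And>x. b x = g [x]"
    using assms by (auto simp: computable_def turing_below_def)
  have "grec (\<lambda>_. False) 1 (\<lambda>xs. xs ! 0 * g xs + xs ! 0)"
    by (rule grec_add[OF grec_mult[OF _ g(1)]]) (simp_all add: grec.proj)
  then show ?thesis
    unfolding computable_def turing_below_def using g(2) by force
qed

lemma turing_below_prefix_code:
  assumes "computable h"
  shows "turing_below (\<lambda>n. prefix_code A (h n)) A"
proof -
  obtain g where g: "grec (\<lambda>_. False) 1 g" "\<And>x. h x = g [x]"
    using assms by (auto simp: computable_def turing_below_def)
  have "grec A 1 (\<lambda>xs. prefix_code A (hd [g xs]))"
    by (rule grec_compose1[OF grec_prefix_code grec_without_oracle[OF g(1)]])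
  then show ?thesis
    unfolding turing_below_def using g(2) by force
qed

lemma recursively_traceable_imp_traced_prefixes:
  assumes "recursively_traceable X"
  obtains b g where "computable b" "computable g" "\<And>n. card (D (g n)) \<le> b n"
    "X \<in> traced_prefixes (\<lambda>n. n * b n + n) g"
proof -
  obtain b where "computable b" and trace: "\<And>f. turing_below f X \<Longrightarrow>
      \<exists>g. computable g \<and> (\<forall>n. card (D (g n)) \<le> b n \<and> f n \<in> D (g n))"
    using assms unfolding recursively_traceable_def by blast
  have "turing_below (\<lambda>n. prefix_code X (n * b n + n)) X"
    by (intro turing_below_prefix_code computable_prefix_length \<open>computable b\<close>)
  then obtain g where "computable g" "\<And>n. card (D (g n)) \<le> b n"
      "\<And>n. prefix_code X (n * b n + n) \<in> D (g n)"
    using trace by blast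
  with \<open>computable b\<close> show thesis
    by (intro that[of b g]) (auto simp: traced_prefixes_def)
qed

section \<open>Countably many computable functions\<close>

datatype grec_term = Zero | Succ | Proj nat | Oracle | Comp grec_term "grec_term list"
  | Prim_rec grec_term grec_term | Mu grec_term

instance grec_term :: countable
  by countable_datatype

fun grec_eval :: "(nat \<Rightarrow> bool) \<Rightarrow> grec_term \<Rightarrow> nat list \<Rightarrow> nat" where
  "grec_eval A Zero xs = 0"
| "grec_eval A Succ xs = Suc (hd xs)"
| "grec_eval A (Proj i) xs = xs ! i"
| "grec_eval A Oracle xs = (if A (hd xs) then 1 else 0)"
| "grec_eval A (Comp t ts) xs = grec_eval A t (map (\<lambda>u. grec_eval A u xs) ts)"
| "grec_eval A (Prim_rec t u) xs =
     rec_nat (grec_eval A t (tl xs)) (\<lambda>k r. grec_eval A u (k # r # tl xs)) (hd xs)"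
| "grec_eval A (Mu t) xs = (LEAST y. grec_eval A t (y # xs) = 0)"

lemma grec_imp_grec_eval: "grec A n f \<Longrightarrow> \<exists>t. f = grec_eval A t"
proof (induction rule: grec.induct)
  case zero
  have "(\<lambda>xs. 0) = grec_eval A Zero" by auto
  then show ?case by blast
next
  case succ
  have "(\<lambda>xs. Suc (hd xs)) = grec_eval A Succ" by auto
  then show ?case by blast
next
  case (proj i n)
  have "(\<lambda>xs. xs ! i) = grec_eval A (Proj i)" by auto
  then show ?case by blast
next
  case orac
  have "(\<lambda>xs. if A (hd xs) then 1 else 0) = grec_eval A Oracle" by auto
  then show ?case by blast
next
  case (comp m g n fs)
  obtain t where t: "g = grec_eval A t"
    using comp.IH by blast
  obtain us where us: "\<And>i. i < m \<Longrightarrow> fs i = grec_eval A (us i)"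
    using comp.IH by metis
  have "map (\<lambda>u. grec_eval A u xs) (map us [0..<m]) = map (\<lambda>i. fs i xs) [0..<m]" for xs
    by (simp add: us)
  then have "(\<lambda>xs. g (map (\<lambda>i. fs i xs) [0..<m])) = grec_eval A (Comp t (map us [0..<m]))"
    by (simp add: t fun_eq_iff del: map_map)
  then show ?case by blast
next
  case (prim_rec n g h)
  then obtain t u where "g = grec_eval A t" "h = grec_eval A u"
    by blast
  then have "(\<lambda>xs. rec_nat (g (tl xs)) (\<lambda>k r. h (k # r # tl xs)) (hd xs)) = grec_eval A (Prim_rec t u)"
    by auto
  then show ?case by blast
next
  case (mu n g)
  then obtain t where "g = grec_eval A t"
    by blast
  then have "(\<lambda>xs. LEAST y. g (y # xs) = 0) = grec_eval A (Mu t)"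
    by auto
  then show ?case by blast
qed

lemma countable_computable: "countable {f. computable f}"
proof (rule countable_subset)
  show "{f. computable f} \<subseteq> range (\<lambda>t x. grec_eval (\<lambda>_. False) t [x])"
  proof
    fix f
    assume "f \<in> {f. computable f}"
    then obtain g where "grec (\<lambda>_. False) 1 g" "\<And>x. f x = g [x]"
      by (auto simp: computable_def turing_below_def)
    then show "f \<in> range (\<lambda>t x. grec_eval (\<lambda>_. False) t [x])"
      using grec_imp_grec_eval by fastforce
  qed
qed simp

theorem mainTheorem4:
  shows "hausdorff_dim {X. recursively_traceable X} = 0"
proof (rule hausdorff_dim_eq_0I)
  fix s :: real
  assume "0 < s"
  define P where "P = {(b, g). computable b \<and> computable g \<and> (\<forall>n. card (D (g n)) \<le> b n)}"
  have "countable P"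
  proof (rule countable_subset)
    show "P \<subseteq> {f. computable f} \<times> {f. computable f}"
      by (auto simp: P_def)
    show "countable ({f. computable f} \<times> {f. computable f})"
      by (intro countable_SIGMA countable_computable)
  qed
  have cover: "{X. recursively_traceable X} \<subseteq> (\<Union>(b, g)\<in>P. traced_prefixes (\<lambda>n. n * b n + n) g)"
  proof
    fix X
    assume "X \<in> {X. recursively_traceable X}"
    then obtain b g where "computable b" "computable g" "\<And>n. card (D (g n)) \<le> b n"
      "X \<in> traced_prefixes (\<lambda>n. n * b n + n) g"
      using recursively_traceable_imp_traced_prefixes by blast
    then show "X \<in> (\<Union>(b, g)\<in>P. traced_prefixes (\<lambda>n. n * b n + n) g)"
      unfolding P_def by blast
  qed
  have "hausdorff_measure s (\<Union>(b, g)\<in>P. traced_prefixes (\<lambda>n. n * b n + n) g) = 0"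
    using \<open>0 < s\<close> \<open>countable P\<close>
    by (rule hausdorff_measure_countable_UN_eq_0)
      (auto simp: P_def intro: hausdorff_measure_traced_prefixes[OF \<open>0 < s\<close>])
  with hausdorff_measure_mono[OF cover, of s]
  show "hausdorff_measure s {X. recursively_traceable X} = 0"
    by simp
qed

end
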